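(* Let $G=(V,E)$ be a minimally $d$-rigid graph and $v_1,\dots,v_d$ a sequence of $d$ vertices of $G$. Suppose $(G,p_1),\dots,(G,p_t)$ are infinitesimally rigid real frameworks in $\mathbb{R}^d$ that are pairwise equivalent but pairwise non-congruent, and that $p_i(v_1),\dots,p_i(v_d)$ are affinely independent for every $1\le i\le t$. Then $r_d(G)\ge t$.
   Context: On $\mathbb{R}^d$, $\|\cdot\|$ is the Euclidean norm. Realisations $p,q:V\to\mathbb{R}^d$ are equivalent if $\|p(v)-p(w)\|=\|q(v)-q(w)\|$ for all edges $vw$, and congruent if related by an isometry of $\mathbb{R}^d$. A realisation is generic if its coordinates are algebraically independent over $\mathbb{Q}$. The rigidity matrix $R(G,p)$ is the $|E|\times d|V|$ matrix whose row for edge $uv$ has $p(u)-p(v)$ in the columns of $u$, $p(v)-p(u)$ in the columns of $v$, zeros elsewhere; $(G,p)$ is infinitesimally rigid if its rank is $d|V|-\binom{d+1}{2}$ (or $G=K_n$, $n\le d+1$, with affinely independent points). $G$ is $d$-rigid if some generic framework is rigid, minimally $d$-rigid if additionally $G-e$ is not $d$-rigid for every edge $e$. $r_d(G)$ is the maximum over generic $p:V\to\mathbb{R}^d$ of the number of congruence classes of real realisations equivalent to $p$. *)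

theory Defs
  imports "HOL-Analysis.Analysis" "HOL-Library.Extended_Nat"
begin

text \<open>The dimension d is CARD('n); points of R^d are of type real^'n.
A finite simple graph G=(V,E) has vertex set V = UNIV of a finite type 'v, and
edge set E, a set of 2-element vertex sets.\<close>

definition simple_graph :: "'v set set \<Rightarrow> bool" where
  "simple_graph E \<longleftrightarrow> (\<forall>e\<in>E. card e = 2)"

definition complete_graph :: "'v set set \<Rightarrow> bool" where
  "complete_graph E \<longleftrightarrow> E = {e. card e = 2}"

text \<open>Algebraic independence over Q of a finite family of reals: no nonzero
polynomial with rational coefficients (given by finitely many coefficients c alpha
of the monomials prod_i x_i^(alpha i)) vanishes at the family.\<close>
definition alg_indep_Q :: "('i::finite \<Rightarrow> real) \<Rightarrow> bool" where
  "alg_indep_Q x \<longleftrightarrow>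
     (\<forall>c :: ('i \<Rightarrow> nat) \<Rightarrow> rat. finite {\<alpha>. c \<alpha> \<noteq> 0} \<longrightarrow>
        (\<Sum>\<alpha>\<in>{\<alpha>. c \<alpha> \<noteq> 0}. of_rat (c \<alpha>) * (\<Prod>i\<in>UNIV. x i ^ \<alpha> i)) = 0 \<longrightarrow>
        (\<forall>\<alpha>. c \<alpha> = 0))"

definition generic :: "('v::finite \<Rightarrow> real^'n) \<Rightarrow> bool" where
  "generic p \<longleftrightarrow> alg_indep_Q (\<lambda>(v, j). p v $ j)"

definition aff_indep_points :: "('a \<Rightarrow> real^'n) \<Rightarrow> bool" where
  "aff_indep_points f \<longleftrightarrow> inj f \<and> \<not> affine_dependent (range f)"

definition rig_row :: "('v::finite \<Rightarrow> real^'n) \<Rightarrow> 'v \<Rightarrow> 'v \<Rightarrow> real^('v \<times> 'n)" where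
  "rig_row p u w = (\<chi> xj. if fst xj = u then (p u - p w) $ snd xj
                              else if fst xj = w then (p w - p u) $ snd xj else 0)"

definition rig_rank :: "'v set set \<Rightarrow> ('v::finite \<Rightarrow> real^'n) \<Rightarrow> nat" where
  "rig_rank E p = dim (span {rig_row p u w | u w. {u, w} \<in> E})"

definition inf_rigid :: "'v set set \<Rightarrow> ('v::finite \<Rightarrow> real^'n) \<Rightarrow> bool" where
  "inf_rigid E p \<longleftrightarrow>
     int (rig_rank E p) = int (CARD('n) * CARD('v)) - int ((CARD('n) + 1) choose 2)
     \<or> (complete_graph E \<and> CARD('v) \<le> CARD('n) + 1 \<and> aff_indep_points p)"

definition d_rigid :: "'v::finite set set \<Rightarrow> 'n::finite itself \<Rightarrow> bool" where
  "d_rigid E (_ :: 'n itself) \<longleftrightarrow>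
     (\<exists>p :: 'v \<Rightarrow> real^'n. generic p \<and> inf_rigid E p)"

definition min_d_rigid :: "'v::finite set set \<Rightarrow> 'n::finite itself \<Rightarrow> bool" where
  "min_d_rigid E d \<longleftrightarrow> d_rigid E d \<and> (\<forall>e\<in>E. \<not> d_rigid (E - {e}) d)"

definition equivalent :: "'v set set \<Rightarrow> ('v \<Rightarrow> real^'n) \<Rightarrow> ('v \<Rightarrow> real^'n) \<Rightarrow> bool" where
  "equivalent E p q \<longleftrightarrow>
     (\<forall>u w. {u, w} \<in> E \<longrightarrow> norm (p u - p w) = norm (q u - q w))"

definition congruent :: "('v \<Rightarrow> real^'n) \<Rightarrow> ('v \<Rightarrow> real^'n) \<Rightarrow> bool" where
  "congruent p q \<longleftrightarrow>
     (\<exists>f :: real^'n \<Rightarrow> real^'n. (\<forall>x y. dist (f x) (f y) = dist x y) \<and> (\<forall>v. q v = f (p v)))"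

definition num_classes :: "'v set set \<Rightarrow> ('v \<Rightarrow> real^'n) \<Rightarrow> enat" where
  "num_classes E p =
     (let C = {q. equivalent E p q} // {(q, q'). congruent q q'}
      in if finite C then enat (card C) else \<infinity>)"

definition r_d :: "'v::finite set set \<Rightarrow> 'n::finite itself \<Rightarrow> enat" where
  "r_d E (_ :: 'n itself) = (SUP p \<in> {p :: 'v \<Rightarrow> real^'n. generic p}. num_classes E p)"

end

(*
  Minimality of G forces the rows of the rigidity matrix R(G,p) to be linearly independent at
  every infinitesimally rigid realisation p (complete graphs are excluded: there, equivalent
  realisations are congruent, so t <= 1). Hence the edge-length map is a submersion at each p_i,
  and by the open mapping theorem every realisation close to p_1 is equivalent to realisations
  q_i close to p_i. Generic realisations are dense (rescale the coordinates of one generic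
  realisation by nonzero rationals), so a generic q close to p_1 can be chosen. Non-congruence is
  an open condition, hence the q_i are pairwise non-congruent realisations equivalent to q.
*)
theory Submission
  imports Defs
begin

section \<open>Congruence\<close>

lemma exists_orthogonal_transformation_fixing:
  fixes x y :: "'a::euclidean_space"
  assumes "norm x = norm y" and "\<forall>b\<in>B. inner x b = inner y b"
  shows "\<exists>h. orthogonal_transformation h \<and> h x = y \<and> (\<forall>b\<in>B. h b = b)"
proof (cases "x = y")
  case True
  then show ?thesis by (intro exI[of _ id]) (auto simp: orthogonal_transformation_def linear_id)
next
  case False
  define n where "n = x - y"
  have nn: "inner n n \<noteq> 0" using False by (simp add: n_def)
  define h where "h z = z - (2 * inner z n / inner n n) *\<^sub>R n" for z
  have "linear h" unfolding h_def
    by (intro linearI) (auto simp: inner_add_left algebra_simps add_divide_distrib)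
  moreover have "norm (h z) = norm z" for z
  proof -
    have "inner (h z) (h z) = inner z z - 2 * (2 * inner z n / inner n n) * inner z n
        + (2 * inner z n / inner n n)^2 * inner n n"
      unfolding h_def
      by (simp add: inner_diff_left inner_diff_right inner_commute power2_eq_square algebra_simps)
    also have "\<dots> = inner z z" using nn by (simp add: power2_eq_square field_simps)
    finally show ?thesis by (simp add: norm_eq_sqrt_inner)
  qed
  moreover have "h x = y"
  proof -
    have "inner n n = 2 * inner x n"
      using assms(1) unfolding n_def
      by (simp add: inner_diff_left inner_diff_right inner_commute[of y x] norm_eq_sqrt_inner)
    then show ?thesis using nn by (simp add: h_def n_def)
  qed
  moreover have "h b = b" if "b \<in> B" for b
    using assms(2) that by (simp add: h_def n_def inner_diff_right inner_commute)
  ultimately show ?thesis by (intro exI[of _ h]) (auto simp: orthogonal_transformation)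
qed

text \<open>Built one vector at a time, each step composing with a reflection that fixes the vectors
  already placed.\<close>
lemma exists_orthogonal_transformation_gram:
  fixes a b :: "'i \<Rightarrow> 'a::euclidean_space"
  assumes "finite W" and "\<forall>u\<in>W. \<forall>w\<in>W. inner (a u) (a w) = inner (b u) (b w)"
  shows "\<exists>h. orthogonal_transformation h \<and> (\<forall>w\<in>W. h (a w) = b w)"
  using assms
proof (induction W rule: finite_induct)
  case empty
  then show ?case by (intro exI[of _ id]) (auto simp: orthogonal_transformation_def linear_id)
next
  case (insert u W)
  then obtain h where h: "orthogonal_transformation h" "\<forall>w\<in>W. h (a w) = b w" by auto
  have "norm (h (a u)) = norm (b u)"
    using insert.prems orthogonal_transformation_norm[OF h(1)] by (simp add: norm_eq_sqrt_inner)
  moreover have "\<forall>c\<in>b ` W. inner (h (a u)) c = inner (b u) c"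
  proof
    fix c assume "c \<in> b ` W"
    then obtain w where "w \<in> W" "c = b w" by auto
    then show "inner (h (a u)) c = inner (b u) c"
      using h insert.prems by (metis insertCI orthogonal_transformation_def)
  qed
  ultimately obtain r where r: "orthogonal_transformation r" "r (h (a u)) = b u" "\<forall>c\<in>b ` W. r c = c"
    using exists_orthogonal_transformation_fixing by blast
  then show ?case
    using h orthogonal_transformation_compose[OF r(1) h(1)]
    by (intro exI[of _ "r \<circ> h"] conjI) (simp_all del: o_apply, simp_all)
qed

lemma congruent_iff_dist_eq:
  fixes p q :: "'v::finite \<Rightarrow> real^'n"
  shows "congruent p q \<longleftrightarrow> (\<forall>u w. dist (p u) (p w) = dist (q u) (q w))"
proof
  assume "congruent p q"
  then show "\<forall>u w. dist (p u) (p w) = dist (q u) (q w)" unfolding congruent_def by auto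
next
  assume dist_eq: "\<forall>u w. dist (p u) (p w) = dist (q u) (q w)"
  fix v0 :: 'v
  define a where "a v = p v - p v0" for v
  define b where "b v = q v - q v0" for v
  have "inner (a u) (a w) = inner (b u) (b w)" for u w
  proof -
    have "norm (a v) = norm (b v)" for v
      using dist_eq by (simp add: a_def b_def dist_norm)
    moreover have "norm (a u - a w) = norm (b u - b w)"
      using dist_eq by (simp add: a_def b_def dist_norm)
    ultimately show ?thesis by (simp add: dot_norm_neg)
  qed
  then obtain h where h: "orthogonal_transformation h" "\<forall>v. h (a v) = b v"
    using exists_orthogonal_transformation_gram[of UNIV a b] by auto
  define f where "f z = h (z - p v0) + q v0" for z
  have "dist (f x) (f y) = dist x y" for x y
  proof -
    have "f x - f y = h (x - y)"
      using linear_diff[OF orthogonal_transformation_linear[OF h(1)]] by (simp add: f_def)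
    then show ?thesis using orthogonal_transformation_norm[OF h(1)] by (simp add: dist_norm)
  qed
  moreover have "q v = f (p v)" for v using h(2) by (simp add: f_def a_def b_def)
  ultimately show "congruent p q" unfolding congruent_def by blast
qed

lemma congruent_refl: "congruent p p"
  unfolding congruent_def by (intro exI[of _ id]) auto

lemma not_complete_graph_if_equivalent_not_congruent:
  fixes p q :: "'v::finite \<Rightarrow> real^'n"
  assumes "equivalent E p q" and "\<not> congruent p q"
  shows "\<not> complete_graph E"
proof
  assume "complete_graph E"
  have "dist (p u) (p w) = dist (q u) (q w)" for u w
  proof (cases "u = w")
    case False
    then have "{u, w} \<in> E" using \<open>complete_graph E\<close> by (simp add: complete_graph_def)
    then show ?thesis using assms(1) by (simp add: equivalent_def dist_norm)
  qed simp
  then show False using assms(2) by (simp add: congruent_iff_dist_eq)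
qed

section \<open>Rank of the rigidity matrix\<close>

lemma dim_image_le_card:
  fixes f :: "'e \<Rightarrow> 'a::euclidean_space"
  assumes "finite E"
  shows "dim (f ` E) \<le> card E"
  using assms dim_le_card'[of "f ` E"] card_image_le[of E f] by simp

lemma exists_redundant_if_dim_less_card:
  fixes f :: "'e \<Rightarrow> 'a::euclidean_space"
  assumes "finite E" and "dim (f ` E) < card E"
  shows "\<exists>e\<in>E. dim (f ` (E - {e})) = dim (f ` E)"
proof -
  have "\<exists>e\<in>E. f e \<in> span (f ` (E - {e}))"
  proof (cases "inj_on f E")
    case False
    then obtain e e' where "e \<in> E" "e' \<in> E" "e \<noteq> e'" "f e = f e'" unfolding inj_on_def by auto
    then show ?thesis by (intro bexI[of _ e]) (auto intro!: span_base)
  next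
    case True
    then have "dependent (f ` E)"
      using assms dim_eq_card_independent[of "f ` E"] by (auto simp: card_image)
    then obtain e where "e \<in> E" "f e \<in> span (f ` E - {f e})" unfolding dependent_def by auto
    moreover have "f ` E - {f e} = f ` (E - {e})" using True \<open>e \<in> E\<close> by (auto simp: inj_on_def)
    ultimately show ?thesis by auto
  qed
  then obtain e where "e \<in> E" "f e \<in> span (f ` (E - {e}))" ..
  then have "span (f ` (E - {e})) = span (f ` E)"
    using span_redundant[of "f e" "f ` (E - {e})"] by (simp add: insert_absorb image_insert[symmetric])
  then show ?thesis using \<open>e \<in> E\<close> by (metis dim_span)
qed

lemma coeffs_zero_if_dim_eq_card:
  fixes f :: "'e \<Rightarrow> 'a::euclidean_space"
  assumes "finite E" and "dim (f ` E) = card E" and "(\<Sum>e\<in>E. c e *\<^sub>R f e) = 0" and "e \<in> E"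
  shows "c e = 0"
proof -
  have "dim (f ` E) \<le> card (f ` E)" "card (f ` E) \<le> card E"
    using assms(1) by (auto intro: dim_le_card' card_image_le)
  then have card_eq: "card (f ` E) = card E" and "dim (f ` E) = card (f ` E)"
    using assms(2) by linarith+
  then have "independent (f ` E)"
    using card_eq_dim[of "f ` E" "f ` E"] assms(1) by (simp add: span_superset)
  moreover have inj: "inj_on f E" using assms(1) card_eq by (rule eq_card_imp_inj_on)
  moreover have "(\<Sum>v\<in>f ` E. c (the_inv_into E f v) *\<^sub>R v) = 0"
    using assms(3) by (simp add: sum.reindex[OF inj] the_inv_into_f_f[OF inj])
  ultimately show ?thesis
    using assms(4) the_inv_into_f_f[OF inj assms(4)] by (force simp: independent_explicit)
qed

text \<open>An arbitrary orientation of the edge e, unspecified unless card e = 2.\<close>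
definition edge_ends :: "'v set \<Rightarrow> 'v \<times> 'v" where
  "edge_ends e = (SOME uw. e = {fst uw, snd uw} \<and> fst uw \<noteq> snd uw)"

lemma edge_ends:
  assumes "card e = 2"
  shows "e = {fst (edge_ends e), snd (edge_ends e)}" and "fst (edge_ends e) \<noteq> snd (edge_ends e)"
proof -
  obtain x y where "e = {x, y}" "x \<noteq> y" using assms unfolding card_2_iff by blast
  then have "\<exists>uw. e = {fst uw, snd uw} \<and> fst uw \<noteq> snd uw" by (intro exI[of _ "(x, y)"]) auto
  from someI_ex[OF this]
  show "e = {fst (edge_ends e), snd (edge_ends e)}" and "fst (edge_ends e) \<noteq> snd (edge_ends e)"
    unfolding edge_ends_def by auto
qed

lemma edge_ends_cases:
  assumes "u \<noteq> w"
  obtains "edge_ends {u, w} = (u, w)" | "edge_ends {u, w} = (w, u)"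
  using edge_ends[of "{u, w}"] assms by (cases "edge_ends {u, w}") (auto simp: doubleton_eq_iff)

definition edge_row :: "('v::finite \<Rightarrow> real^'n) \<Rightarrow> 'v set \<Rightarrow> real^('v \<times> 'n)" where
  "edge_row p e = rig_row p (fst (edge_ends e)) (snd (edge_ends e))"

lemma rig_row_swap: "rig_row p w u = rig_row p u w" if "u \<noteq> w"
  using that unfolding rig_row_def by (auto simp: vec_eq_iff)

lemma rig_rows_eq_edge_rows:
  assumes "\<forall>e\<in>E. card e = 2"
  shows "{rig_row p u w | u w. {u, w} \<in> E} = edge_row p ` E"
proof (intro set_eqI iffI)
  fix x assume "x \<in> {rig_row p u w | u w. {u, w} \<in> E}"
  then obtain u w where x: "x = rig_row p u w" and "{u, w} \<in> E" by auto
  moreover have "u \<noteq> w" using assms \<open>{u, w} \<in> E\<close> by fastforce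
  then have "x = edge_row p {u, w}"
    by (cases rule: edge_ends_cases) (use \<open>u \<noteq> w\<close> in \<open>auto simp: x edge_row_def rig_row_swap\<close>)
  ultimately show "x \<in> edge_row p ` E" by blast
next
  fix x assume "x \<in> edge_row p ` E"
  then obtain e where "e \<in> E" "x = edge_row p e" by auto
  moreover have "{fst (edge_ends e), snd (edge_ends e)} \<in> E"
    using edge_ends(1)[of e] assms \<open>e \<in> E\<close> by simp
  ultimately show "x \<in> {rig_row p u w | u w. {u, w} \<in> E}"
    by (auto simp: edge_row_def)
qed

lemma rig_rank_eq_dim_edge_rows:
  "\<forall>e\<in>E. card e = 2 \<Longrightarrow> rig_rank E p = dim (edge_row p ` E)"
  by (simp add: rig_rank_def rig_rows_eq_edge_rows)

lemma rig_rank_eq_card_if_min_d_rigid: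
  fixes E :: "'v::finite set set" and p :: "'v \<Rightarrow> real^'n"
  assumes "simple_graph E" and "min_d_rigid E TYPE('n)" and "\<not> complete_graph E"
    and "inf_rigid E p"
  shows "rig_rank E p = card E"
proof -
  have E2: "\<forall>e\<in>E. card e = 2" using assms(1) by (simp add: simple_graph_def)
  obtain p0 :: "'v \<Rightarrow> real^'n" where p0: "generic p0" "inf_rigid E p0"
    using assms(2) by (auto simp: min_d_rigid_def d_rigid_def)
  have rank_formula: "int (rig_rank E q) = int (CARD('n) * CARD('v)) - int ((CARD('n) + 1) choose 2)"
    if "inf_rigid E q" for q :: "'v \<Rightarrow> real^'n"
    using that assms(3) unfolding inf_rigid_def by blast
  have "rig_rank E p0 = rig_rank E p" using rank_formula[OF assms(4)] rank_formula[OF p0(2)] by linarith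
  moreover have "rig_rank E p0 = card E"
  proof (rule ccontr)
    assume "rig_rank E p0 \<noteq> card E"
    then have "dim (edge_row p0 ` E) < card E"
      using dim_image_le_card[of E "edge_row p0"] by (simp add: rig_rank_eq_dim_edge_rows[OF E2])
    then obtain e where "e \<in> E" and "dim (edge_row p0 ` (E - {e})) = dim (edge_row p0 ` E)"
      using exists_redundant_if_dim_less_card[of E "edge_row p0"] by auto
    moreover have "\<forall>e'\<in>E - {e}. card e' = 2" using E2 by blast
    ultimately have "rig_rank (E - {e}) p0 = rig_rank E p0"
      using E2 by (simp only: rig_rank_eq_dim_edge_rows)
    then have "inf_rigid (E - {e}) p0" using rank_formula[OF p0(2)] unfolding inf_rigid_def by simp
    then have "d_rigid (E - {e}) TYPE('n)" using p0(1) by (auto simp: d_rigid_def)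
    then show False using assms(2) \<open>e \<in> E\<close> by (simp add: min_d_rigid_def)
  qed
  ultimately show ?thesis by simp
qed

section \<open>The edge-length map\<close>

definition flat :: "('v::finite \<Rightarrow> real^'n) \<Rightarrow> real^('v \<times> 'n)" where
  "flat p = (\<chi> k. p (fst k) $ snd k)"

definition unflat :: "real^('v::finite \<times> 'n::finite) \<Rightarrow> 'v \<Rightarrow> real^'n" where
  "unflat x v = (\<chi> j. x $ (v, j))"

lemma unflat_flat [simp]: "unflat (flat p) = p"
  by (auto simp: unflat_def flat_def vec_eq_iff)

lemma flat_unflat [simp]: "flat (unflat x) = x"
  by (auto simp: unflat_def flat_def vec_eq_iff)

lemma flat_diff: "flat (\<lambda>v. p v - q v) = flat p - flat q"
  by (simp add: flat_def vec_eq_iff)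

lemma inner_flat: "inner (flat p) (flat q) = (\<Sum>v\<in>UNIV. inner (p v) (q v))"
proof -
  have "inner (flat p) (flat q) = (\<Sum>k\<in>UNIV \<times> UNIV. p (fst k) $ snd k * q (fst k) $ snd k)"
    by (simp add: inner_vec_def flat_def)
  also have "\<dots> = (\<Sum>v\<in>UNIV. inner (p v) (q v))"
    by (simp add: sum.cartesian_product' inner_vec_def del: UNIV_Times_UNIV)
  finally show ?thesis .
qed

lemma dist_le_dist_flat: "dist (p v) (q v) \<le> dist (flat p) (flat q)"
proof -
  have "(norm (p v - q v))\<^sup>2 \<le> (\<Sum>u\<in>UNIV. inner (p u - q u) (p u - q u))"
    unfolding power2_norm_eq_inner by (rule member_le_sum) auto
  also have "\<dots> = (norm (flat p - flat q))\<^sup>2"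
    by (simp add: power2_norm_eq_inner inner_flat flip: flat_diff)
  finally show ?thesis unfolding dist_norm by (rule power2_le_imp_le) simp
qed

definition edge_vec :: "'v set \<Rightarrow> real^('v::finite \<times> 'n::finite) \<Rightarrow> real^'n" where
  "edge_vec e x = unflat x (fst (edge_ends e)) - unflat x (snd (edge_ends e))"

lemma linear_edge_vec: "linear (edge_vec e)"
  by (intro linearI) (auto simp: edge_vec_def unflat_def vec_eq_iff algebra_simps)

lemma rig_row_eq_flat:
  "rig_row p u w = flat (\<lambda>v. if v = u then p u - p w else if v = w then p w - p u else 0)"
  by (auto simp: rig_row_def flat_def vec_eq_iff)

lemma inner_edge_row:
  assumes "card e = 2"
  shows "inner (edge_row p e) x = inner (edge_vec e (flat p)) (edge_vec e x)"
proof -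
  obtain u w where uw: "edge_ends e = (u, w)" by (cases "edge_ends e")
  then have "u \<noteq> w" using edge_ends(2)[OF assms] by simp
  have "inner (edge_row p e) (flat (unflat x))
      = (\<Sum>v\<in>UNIV. (if v = u then inner (p u - p w) (unflat x u) else 0)
                  + (if v = w then inner (p w - p u) (unflat x w) else 0))"
    unfolding edge_row_def rig_row_eq_flat inner_flat uw
    by (intro sum.cong) (use \<open>u \<noteq> w\<close> in auto)
  also have "\<dots> = inner (p u - p w) (unflat x u - unflat x w)"
    by (simp add: sum.distrib inner_diff_left inner_diff_right)
  finally show ?thesis by (simp add: edge_vec_def uw)
qed

text \<open>Outside E the coordinates are filled by the free parameter z: this makes the derivative
  surjective whenever the edge rows are independent, as the open mapping theorem
  sussmann_open_mapping requires.\<close>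
definition edge_map ::
    "'v set set \<Rightarrow> (real^('v::finite \<times> 'n::finite)) \<times> (real^('v set)) \<Rightarrow> real^('v set)" where
  "edge_map E xz =
     (\<chi> e. if e \<in> E then inner (edge_vec e (fst xz)) (edge_vec e (fst xz)) else snd xz $ e)"

definition edge_map_deriv ::
    "'v set set \<Rightarrow> real^('v::finite \<times> 'n::finite)
       \<Rightarrow> (real^('v \<times> 'n)) \<times> (real^('v set)) \<Rightarrow> real^('v set)" where
  "edge_map_deriv E x hk =
     (\<chi> e. if e \<in> E then 2 * inner (edge_vec e x) (edge_vec e (fst hk)) else snd hk $ e)"

lemma has_derivative_edge_map: "(edge_map E has_derivative edge_map_deriv E (fst xz)) (at xz)"
proof -
  have "((\<lambda>y. edge_map E y $ e) has_derivative (\<lambda>hk. edge_map_deriv E (fst xz) hk $ e)) (at xz)" for e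
  proof (cases "e \<in> E")
    case True
    have "bounded_linear (\<lambda>y. edge_vec e (fst y))"
      using linear_edge_vec[of e]
      by (intro bounded_linear_compose[OF _ bounded_linear_fst]) (simp add: linear_conv_bounded_linear)
    then have "((\<lambda>y. edge_vec e (fst y)) has_derivative (\<lambda>hk. edge_vec e (fst hk))) (at xz)"
      by (rule bounded_linear_imp_has_derivative)
    from has_derivative_inner[OF this this]
    have "((\<lambda>y. inner (edge_vec e (fst y)) (edge_vec e (fst y))) has_derivative
        (\<lambda>hk. 2 * inner (edge_vec e (fst xz)) (edge_vec e (fst hk)))) (at xz)"
      by (simp add: inner_commute)
    then show ?thesis using True by (simp add: edge_map_def edge_map_deriv_def)
  next
    case False
    have "((\<lambda>y. snd y $ e) has_derivative (\<lambda>hk. snd hk $ e)) (at xz)"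
      using bounded_linear_compose[OF bounded_linear_vec_nth bounded_linear_snd]
      by (rule bounded_linear_imp_has_derivative)
    then show ?thesis using False by (simp add: edge_map_def edge_map_deriv_def)
  qed
  then show ?thesis
    by (subst has_derivative_componentwise_within) (auto simp: Basis_vec_def inner_axis)
qed

lemma surj_if_orthogonal_range_trivial:
  fixes f :: "'a::euclidean_space \<Rightarrow> 'b::euclidean_space"
  assumes "linear f" and "\<And>y. (\<And>x. inner (f x) y = 0) \<Longrightarrow> y = 0"
  shows "surj f"
proof -
  have "y = 0" if "adjoint f y = 0" for y
    using assms(2)[of y] that by (simp add: adjoint_works[OF assms(1), symmetric])
  then have "inj (adjoint f)"
    using linear_injective_0[OF adjoint_linear[OF assms(1)]] by blast
  then show ?thesis using assms(1) by simp
qed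

lemma linear_edge_map_deriv: "linear (edge_map_deriv E x)"
  by (intro linearI)
     (auto simp: edge_map_deriv_def vec_eq_iff linear_add[OF linear_edge_vec]
        linear_scale[OF linear_edge_vec] inner_add_right algebra_simps)

lemma inner_edge_map_deriv:
  assumes "\<forall>e\<in>E. card e = 2"
  shows "inner (edge_map_deriv E (flat p) (h, 0)) y = 2 * inner (\<Sum>e\<in>E. y $ e *\<^sub>R edge_row p e) h"
proof -
  have "inner (edge_map_deriv E (flat p) (h, 0)) y
      = (\<Sum>e\<in>UNIV. if e \<in> E then 2 * (y $ e * inner (edge_row p e) h) else 0)"
    unfolding inner_vec_def[of "edge_map_deriv E (flat p) (h, 0)"]
    by (intro sum.cong) (auto simp: edge_map_deriv_def inner_edge_row assms)
  also have "\<dots> = (\<Sum>e\<in>E. 2 * (y $ e * inner (edge_row p e) h))"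
    by (subst sum.inter_restrict[symmetric]) auto
  also have "\<dots> = 2 * inner (\<Sum>e\<in>E. y $ e *\<^sub>R edge_row p e) h"
    by (simp add: inner_sum_left sum_distrib_left)
  finally show ?thesis .
qed

lemma surj_edge_map_deriv:
  assumes E2: "\<forall>e\<in>E. card e = 2" and rank: "rig_rank E p = card E"
  shows "surj (edge_map_deriv E (flat p))"
proof (rule surj_if_orthogonal_range_trivial[OF linear_edge_map_deriv])
  fix y assume orth: "\<And>hk. inner (edge_map_deriv E (flat p) hk) y = 0"
  define k where "k = (\<chi> e. if e \<in> E then 0 else y $ e)"
  have "edge_map_deriv E (flat p) (0, k) = k"
    by (simp add: edge_map_deriv_def k_def vec_eq_iff linear_0[OF linear_edge_vec])
  moreover have "inner k y = inner k k"
    by (auto simp: k_def inner_vec_def intro!: sum.cong)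
  ultimately have "inner k k = 0"
    using orth[of "(0, k)"] by simp
  then have y_off_E: "y $ e = 0" if "e \<notin> E" for e
    using that by (auto simp: k_def vec_eq_iff dest: spec[of _ e])
  define h where "h = (\<Sum>e\<in>E. y $ e *\<^sub>R edge_row p e)"
  have "inner h h = 0"
    using orth[of "(h, 0)"] inner_edge_map_deriv[OF E2, of p h y] by (simp add: h_def)
  then have "y $ e = 0" if "e \<in> E" for e
    using coeffs_zero_if_dim_eq_card[of E "edge_row p" "\<lambda>e. y $ e"] that rank
    by (simp add: h_def rig_rank_eq_dim_edge_rows[OF E2])
  with y_off_E show "y = 0" by (auto simp: vec_eq_iff)
qed

lemma continuous_on_edge_map: "continuous_on UNIV (edge_map E)"
  using has_derivative_edge_map by (intro has_derivative_continuous_on) blast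

lemma edge_map_open_at:
  assumes "\<forall>e\<in>E. card e = 2" and "rig_rank E p = card E" and "open U" and "(flat p, z) \<in> U"
  shows "edge_map E (flat p, z) \<in> interior (edge_map E ` U)"
proof -
  have deriv: "(edge_map E has_derivative edge_map_deriv E (flat p)) (at (flat p, z))"
    using has_derivative_edge_map[of E "(flat p, z)"] by simp
  obtain g where "linear g" and "edge_map_deriv E (flat p) \<circ> g = id"
    using linear_surjective_right_inverse[OF linear_edge_map_deriv surj_edge_map_deriv[OF assms(1,2)]]
    by blast
  then show ?thesis
    using sussmann_open_mapping[OF open_UNIV continuous_on_edge_map UNIV_I deriv _ _ subset_UNIV, of g U]
      assms(3,4)
    by (simp add: linear_conv_bounded_linear interior_open)
qed

lemma edge_map_flat_edge:
  assumes "{u, w} \<in> E" and "u \<noteq> w"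
  shows "edge_map E (flat p, z) $ {u, w} = (norm (p u - p w))\<^sup>2"
  using assms(2)
  by (cases rule: edge_ends_cases)
     (use assms(1) in \<open>simp_all add: edge_map_def edge_vec_def dot_square_norm norm_minus_commute\<close>)

lemma equivalent_if_edge_map_eq:
  assumes "\<forall>e\<in>E. card e = 2" and "edge_map E (flat p, z) = edge_map E (flat q, z')"
  shows "equivalent E p q"
  unfolding equivalent_def
proof (intro allI impI)
  fix u w assume "{u, w} \<in> E"
  moreover from this have "u \<noteq> w" using assms(1) by fastforce
  ultimately have "(norm (p u - p w))\<^sup>2 = (norm (q u - q w))\<^sup>2"
    using assms(2) by (metis edge_map_flat_edge)
  then show "norm (p u - p w) = norm (q u - q w)" by (simp add: power2_eq_iff_nonneg)
qed

lemma edge_map_eq_if_equivalent: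
  assumes "\<forall>e\<in>E. card e = 2" and "equivalent E p q"
  shows "edge_map E (flat p, z) = edge_map E (flat q, z)"
proof -
  have "edge_map E (flat p, z) $ e = edge_map E (flat q, z) $ e" for e
  proof (cases "e \<in> E")
    case True
    then obtain u w where "e = {u, w}" and "u \<noteq> w" using assms(1) by (meson card_2_iff)
    then show ?thesis
      using True assms(2) by (simp add: edge_map_flat_edge equivalent_def)
  qed (simp add: edge_map_def)
  then show ?thesis by (simp add: vec_eq_iff)
qed

text \<open>The edge-length map is open at p and takes the same value at the equivalent p'.\<close>
lemma eventually_equivalent_near:
  fixes p p' :: "'v::finite \<Rightarrow> real^'n::finite"
  assumes "\<forall>e\<in>E. card e = 2" and "rig_rank E p = card E" and "equivalent E p p'" and "0 < \<delta>"
  shows "\<forall>\<^sub>F x in nhds (flat p'). \<exists>q. dist (flat q) (flat p) < \<delta> \<and> equivalent E (unflat x) q"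
proof -
  define U where "U = ball (flat p) \<delta> \<times> (UNIV :: (real^('v set)) set)"
  define V where "V = interior (edge_map E ` U)"
  have "edge_map E (flat p', 0) \<in> V"
    using edge_map_open_at[OF assms(1,2), of U 0] edge_map_eq_if_equivalent[OF assms(1,3)] assms(4)
    by (simp add: U_def V_def open_Times)
  moreover have "continuous_on UNIV (\<lambda>x. edge_map E (x, 0))"
    by (rule continuous_on_compose2[OF continuous_on_edge_map]) (auto intro!: continuous_intros)
  then have "open ((\<lambda>x. edge_map E (x, 0)) -` V)"
    by (intro open_vimage) (simp_all add: V_def)
  ultimately have "\<forall>\<^sub>F x in nhds (flat p'). edge_map E (x, 0) \<in> V"
    using eventually_nhds_in_open[of "(\<lambda>x. edge_map E (x, 0)) -` V"] by simp
  then show ?thesis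
  proof (rule eventually_mono)
    fix x :: "real^('v \<times> 'n)" assume "edge_map E (x, 0) \<in> V"
    then obtain x' z' where "dist x' (flat p) < \<delta>" and "edge_map E (x', z') = edge_map E (x, 0)"
      using interior_subset by (fastforce simp: V_def U_def dist_commute)
    then show "\<exists>q. dist (flat q) (flat p) < \<delta> \<and> equivalent E (unflat x) q"
      using equivalent_if_edge_map_eq[OF assms(1), of "unflat x" 0 "unflat x'" z']
      by (intro exI[of _ "unflat x'"]) simp
  qed
qed

section \<open>Nearby realisations\<close>

lemma abs_dist_diff_le_dist_add_dist:
  fixes a b a' b' :: "'a::metric_space"
  shows "\<bar>dist a b - dist a' b'\<bar> \<le> dist a a' + dist b b'"
  using dist_triangle[of a b a'] dist_triangle[of a' b b'] dist_triangle[of a' b' a]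
    dist_triangle[of a b' b]
  by (simp add: dist_commute abs_le_iff)

lemma eventually_not_congruent_near:
  fixes p q :: "'v::finite \<Rightarrow> real^'n::finite"
  assumes "\<not> congruent p q"
  shows "\<forall>\<^sub>F \<delta> in at_right 0. \<forall>p' q'. dist (flat p') (flat p) < \<delta> \<longrightarrow> dist (flat q') (flat q) < \<delta>
           \<longrightarrow> \<not> congruent p' q'"
proof -
  obtain u w where "dist (p u) (p w) \<noteq> dist (q u) (q w)"
    using assms congruent_iff_dist_eq by blast
  define g where "g = \<bar>dist (p u) (p w) - dist (q u) (q w)\<bar>"
  have "g > 0" using \<open>dist (p u) (p w) \<noteq> dist (q u) (q w)\<close> by (simp add: g_def)
  have "\<not> congruent p' q'"
    if "dist (flat p') (flat p) < g / 4" and "dist (flat q') (flat q) < g / 4" for p' q'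
  proof
    assume "congruent p' q'"
    then have same: "dist (p' u) (p' w) = dist (q' u) (q' w)" by (simp add: congruent_iff_dist_eq)
    have close: "dist (p' v) (p v) < g / 4" "dist (q' v) (q v) < g / 4" for v
      using that dist_le_dist_flat order.strict_trans1 by metis+
    have "\<bar>dist (p u) (p w) - dist (p' u) (p' w)\<bar> < g / 2"
      using abs_dist_diff_le_dist_add_dist[of "p u" "p w" "p' u" "p' w"] close(1)[of u] close(1)[of w]
      by (simp add: dist_commute)
    moreover have "\<bar>dist (q u) (q w) - dist (q' u) (q' w)\<bar> < g / 2"
      using abs_dist_diff_le_dist_add_dist[of "q u" "q w" "q' u" "q' w"] close(2)[of u] close(2)[of w]
      by (simp add: dist_commute)
    ultimately show False using same unfolding g_def by (simp add: abs_if split: if_splits)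
  qed
  then show ?thesis
    unfolding eventually_at_right_field using \<open>g > 0\<close> by (intro exI[of _ "g / 4"]) auto
qed

lemma eventually_pairwise_not_congruent_near:
  fixes ps :: "'i \<Rightarrow> 'v::finite \<Rightarrow> real^'n::finite"
  assumes "finite I" and "\<forall>i\<in>I. \<forall>j\<in>I. i \<noteq> j \<longrightarrow> \<not> congruent (ps i) (ps j)"
  shows "\<forall>\<^sub>F \<delta> in at_right 0. \<forall>i\<in>I. \<forall>j\<in>I - {i}. \<forall>p' q'. dist (flat p') (flat (ps i)) < \<delta>
           \<longrightarrow> dist (flat q') (flat (ps j)) < \<delta> \<longrightarrow> \<not> congruent p' q'"
proof -
  have "\<forall>\<^sub>F \<delta> in at_right 0. \<forall>j\<in>I - {i}. \<forall>p' q'. dist (flat p') (flat (ps i)) < \<delta>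
      \<longrightarrow> dist (flat q') (flat (ps j)) < \<delta> \<longrightarrow> \<not> congruent p' q'" if "i \<in> I" for i
  proof (rule eventually_ball_finite[OF finite_Diff[OF assms(1)]], rule ballI)
    fix j assume "j \<in> I - {i}"
    then have "j \<in> I" and "i \<noteq> j" by auto
    then have "\<not> congruent (ps i) (ps j)" using assms(2) \<open>i \<in> I\<close> by simp
    then show "\<forall>\<^sub>F \<delta> in at_right 0. \<forall>p' q'. dist (flat p') (flat (ps i)) < \<delta>
        \<longrightarrow> dist (flat q') (flat (ps j)) < \<delta> \<longrightarrow> \<not> congruent p' q'"
      by (rule eventually_not_congruent_near)
  qed
  then show ?thesis by (intro eventually_ball_finite[OF assms(1)] ballI)
qed

lemma alg_indep_Q_nonzero:
  assumes "alg_indep_Q x"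
  shows "x k \<noteq> 0"
proof
  assume xk: "x k = 0"
  define \<delta> where "\<delta> = (\<lambda>i. if i = k then 1 else (0::nat))"
  define c :: "_ \<Rightarrow> rat" where "c = (\<lambda>\<alpha>. if \<alpha> = \<delta> then 1 else 0)"
  have supp: "{\<alpha>. c \<alpha> \<noteq> 0} = {\<delta>}" by (auto simp: c_def)
  have "(\<Prod>i\<in>UNIV. x i ^ \<delta> i) = (\<Prod>i\<in>UNIV. if i = k then x i else 1)"
    by (intro prod.cong) (auto simp: \<delta>_def)
  then have "(\<Prod>i\<in>UNIV. x i ^ \<delta> i) = x k" by simp
  then have "(\<Sum>\<alpha>\<in>{\<alpha>. c \<alpha> \<noteq> 0}. of_rat (c \<alpha>) * (\<Prod>i\<in>UNIV. x i ^ \<alpha> i)) = 0"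
    using xk by (simp add: supp c_def)
  moreover have "finite {\<alpha>. c \<alpha> \<noteq> 0}" by (simp add: supp)
  ultimately have "c \<delta> = 0" using assms[unfolded alg_indep_Q_def, rule_format, of c \<delta>] by blast
  then show False by (simp add: c_def)
qed

text \<open>Rescaling each coordinate by a nonzero rational only rescales the coefficients of a
  polynomial relation.\<close>
lemma alg_indep_Q_scale:
  assumes x: "alg_indep_Q x" and \<rho>: "\<forall>k. \<rho> k \<noteq> 0"
  shows "alg_indep_Q (\<lambda>k. of_rat (\<rho> k) * x k)"
  unfolding alg_indep_Q_def
proof (intro allI impI)
  fix c :: "('a \<Rightarrow> nat) \<Rightarrow> rat" and \<beta>
  assume fin: "finite {\<alpha>. c \<alpha> \<noteq> 0}"
    and rel: "(\<Sum>\<alpha>\<in>{\<alpha>. c \<alpha> \<noteq> 0}. of_rat (c \<alpha>) * (\<Prod>i\<in>UNIV. (of_rat (\<rho> i) * x i) ^ \<alpha> i)) = 0"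
  define c' where "c' \<alpha> = c \<alpha> * (\<Prod>k\<in>UNIV. \<rho> k ^ \<alpha> k)" for \<alpha>
  have nz: "(\<Prod>k\<in>UNIV. \<rho> k ^ \<alpha> k) \<noteq> 0" for \<alpha> using \<rho> by simp
  then have supp: "{\<alpha>. c' \<alpha> \<noteq> 0} = {\<alpha>. c \<alpha> \<noteq> 0}" by (auto simp: c'_def)
  have "of_rat (c' \<alpha>) * (\<Prod>i\<in>UNIV. x i ^ \<alpha> i)
      = of_rat (c \<alpha>) * (\<Prod>i\<in>UNIV. (of_rat (\<rho> i) * x i) ^ \<alpha> i)" for \<alpha>
    by (simp add: c'_def of_rat_mult of_rat_prod of_rat_power power_mult_distrib prod.distrib)
  then have "(\<Sum>\<alpha>\<in>{\<alpha>. c' \<alpha> \<noteq> 0}. of_rat (c' \<alpha>) * (\<Prod>i\<in>UNIV. x i ^ \<alpha> i)) = 0"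
    using rel by (simp add: supp)
  moreover have "finite {\<alpha>. c' \<alpha> \<noteq> 0}" using fin by (simp add: supp)
  ultimately have "c' \<beta> = 0" using x[unfolded alg_indep_Q_def, rule_format, of c' \<beta>] by blast
  then show "c \<beta> = 0" using nz[of \<beta>] by (simp add: c'_def)
qed

lemma exists_nonzero_rat_mult_near:
  fixes x y :: real
  assumes "x \<noteq> 0" and "0 < \<eta>"
  shows "\<exists>r::rat. r \<noteq> 0 \<and> \<bar>of_rat r * x - y\<bar> < \<eta>"
proof -
  define a where "a = y / x"
  define \<epsilon> where "\<epsilon> = \<eta> / \<bar>x\<bar>"
  have "\<epsilon> > 0" using assms by (simp add: \<epsilon>_def)
  obtain s where "s \<in> \<rat>" and "s \<noteq> 0" and "\<bar>s - a\<bar> < \<epsilon>"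
  proof (cases "a \<ge> 0")
    case True
    with Rats_dense_in_real[of a "a + \<epsilon>"] \<open>\<epsilon> > 0\<close> show ?thesis by (fastforce intro: that)
  next
    case False
    with Rats_dense_in_real[of "a - \<epsilon>" a] \<open>\<epsilon> > 0\<close> show ?thesis by (fastforce intro: that)
  qed
  moreover from \<open>s \<in> \<rat>\<close> obtain r where "s = of_rat r" by (auto elim: Rats_cases)
  moreover have "\<bar>of_rat r * x - y\<bar> = \<bar>x\<bar> * \<bar>of_rat r - a\<bar>"
    using assms(1) by (simp add: a_def abs_mult[symmetric] algebra_simps)
  ultimately show ?thesis
    using assms(1) by (intro exI[of _ r]) (simp add: \<epsilon>_def pos_less_divide_eq mult.commute)
qed

lemma generic_unflat_iff: "generic (unflat x) \<longleftrightarrow> alg_indep_Q (vec_nth x)"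
  by (simp add: generic_def unflat_def case_prod_beta')

lemma frequently_generic_near:
  fixes p0 :: "'v::finite \<Rightarrow> real^'n::finite"
  assumes "generic p0"
  shows "\<exists>\<^sub>F x in nhds a. generic (unflat x :: 'v \<Rightarrow> real^'n)"
proof -
  have "\<exists>x. dist x a < \<eta> \<and> generic (unflat x :: 'v \<Rightarrow> real^'n)" if "0 < \<eta>" for \<eta>
  proof -
    define g where "g = flat p0"
    have g: "alg_indep_Q (vec_nth g)" using assms by (simp add: g_def flip: generic_unflat_iff)
    define N where "N = real CARD('v \<times> 'n)"
    have "N > 0" by (simp add: N_def)
    have "\<forall>k. \<exists>r. r \<noteq> 0 \<and> \<bar>of_rat r * g $ k - a $ k\<bar> < \<eta> / N"
      using exists_nonzero_rat_mult_near[OF alg_indep_Q_nonzero[OF g]] \<open>N > 0\<close> that by simp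
    then obtain \<rho> where \<rho>: "\<forall>k. \<rho> k \<noteq> 0" "\<And>k. \<bar>of_rat (\<rho> k) * g $ k - a $ k\<bar> < \<eta> / N"
      by metis
    define x where "x = (\<chi> k. of_rat (\<rho> k) * g $ k)"
    have "dist x a \<le> (\<Sum>k\<in>UNIV. \<bar>(x - a) $ k\<bar>)"
      unfolding dist_norm by (rule norm_le_l1_cart)
    also have "\<dots> < of_nat (card (UNIV :: ('v \<times> 'n) set)) * (\<eta> / N)"
      by (rule sum_bounded_above_strict) (use \<rho>(2) in \<open>auto simp: x_def\<close>)
    also have "\<dots> = \<eta>" using \<open>N > 0\<close> by (simp add: N_def)
    finally have "dist x a < \<eta>" .
    moreover have "vec_nth x = (\<lambda>k. of_rat (\<rho> k) * g $ k)" by (simp add: x_def fun_eq_iff)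
    then have "generic (unflat x :: 'v \<Rightarrow> real^'n)"
      using alg_indep_Q_scale[OF g \<rho>(1)] by (simp add: generic_unflat_iff)
    ultimately show ?thesis by blast
  qed
  then show ?thesis by (auto simp: frequently_def eventually_nhds_metric)
qed

section \<open>Counting congruence classes\<close>

lemma card_le_num_classes:
  fixes q :: "'v \<Rightarrow> real^'n"
  assumes "finite I" and "\<forall>i\<in>I. equivalent E q (qs i)"
    and "\<forall>i\<in>I. \<forall>j\<in>I. i \<noteq> j \<longrightarrow> \<not> congruent (qs i) (qs j)"
  shows "enat (card I) \<le> num_classes E q"
proof -
  define R :: "(('v \<Rightarrow> real^'n) \<times> ('v \<Rightarrow> real^'n)) set" where "R = {(a, b). congruent a b}"
  define C where "C = {q'. equivalent E q q'} // R"
  define cl where "cl i = R `` {qs i}" for i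
  have "cl ` I \<subseteq> C" using assms(2) by (auto simp: C_def cl_def intro!: quotientI)
  moreover have "inj_on cl I"
  proof (rule inj_onI)
    fix i j assume "i \<in> I" "j \<in> I" "cl i = cl j"
    moreover have "qs j \<in> cl j" by (simp add: cl_def R_def congruent_refl)
    ultimately show "i = j" using assms(3) by (auto simp: cl_def R_def)
  qed
  ultimately have "finite C \<Longrightarrow> card I \<le> card C"
    by (metis card_image card_mono)
  then show ?thesis by (simp add: num_classes_def C_def R_def Let_def)
qed

lemma num_classes_le_r_d:
  "generic (q :: 'v::finite \<Rightarrow> real^'n::finite) \<Longrightarrow> num_classes E q \<le> r_d E TYPE('n)"
  unfolding r_d_def by (rule SUP_upper) simp

lemma one_le_r_d:
  fixes E :: "'v::finite set set" and p0 :: "'v \<Rightarrow> real^'n::finite"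
  assumes "generic p0"
  shows "1 \<le> r_d E TYPE('n)"
proof -
  have "enat (card {0::nat}) \<le> num_classes E p0"
    using card_le_num_classes[of "{0::nat}" E p0 "\<lambda>_. p0"] by (simp add: equivalent_def)
  also have "\<dots> \<le> r_d E TYPE('n)" using assms by (rule num_classes_le_r_d)
  finally show ?thesis by (simp add: one_enat_def)
qed

lemma exists_generic_with_noncongruent_equivalents:
  fixes ps :: "'i \<Rightarrow> 'v::finite \<Rightarrow> real^'n::finite" and p0 :: "'v \<Rightarrow> real^'n"
  assumes "\<forall>e\<in>E. card e = 2" and "generic p0" and "finite I" and "i0 \<in> I"
    and "\<forall>i\<in>I. rig_rank E (ps i) = card E" and "\<forall>i\<in>I. equivalent E (ps i) (ps i0)"
    and "\<forall>i\<in>I. \<forall>j\<in>I. i \<noteq> j \<longrightarrow> \<not> congruent (ps i) (ps j)"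
  shows "\<exists>(q :: 'v \<Rightarrow> real^'n) qs. generic q \<and> (\<forall>i\<in>I. equivalent E q (qs i))
           \<and> (\<forall>i\<in>I. \<forall>j\<in>I. i \<noteq> j \<longrightarrow> \<not> congruent (qs i) (qs j))"
proof -
  have "\<forall>\<^sub>F \<delta> in at_right 0. 0 < \<delta> \<and> (\<forall>i\<in>I. \<forall>j\<in>I - {i}. \<forall>p' q'. dist (flat p') (flat (ps i)) < \<delta>
      \<longrightarrow> dist (flat q') (flat (ps j)) < \<delta> \<longrightarrow> \<not> congruent p' q')"
    using eventually_pairwise_not_congruent_near[OF assms(3,7)]
    by (intro eventually_conj eventually_at_right_less)
  then obtain \<delta> :: real where "0 < \<delta>" and separated: "\<forall>i\<in>I. \<forall>j\<in>I - {i}. \<forall>p' q'.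
      dist (flat p') (flat (ps i)) < \<delta> \<longrightarrow> dist (flat q') (flat (ps j)) < \<delta> \<longrightarrow> \<not> congruent p' q'"
    by (auto dest: eventually_happens'[OF trivial_limit_at_right_real])
  have "\<forall>\<^sub>F x in nhds (flat (ps i0)).
      \<forall>i\<in>I. \<exists>q. dist (flat q) (flat (ps i)) < \<delta> \<and> equivalent E (unflat x) q"
  proof (rule eventually_ball_finite[OF assms(3)], rule ballI)
    fix i assume "i \<in> I"
    with assms(5,6) show "\<forall>\<^sub>F x in nhds (flat (ps i0)).
        \<exists>q. dist (flat q) (flat (ps i)) < \<delta> \<and> equivalent E (unflat x) q"
      by (intro eventually_equivalent_near[OF assms(1) _ _ \<open>0 < \<delta>\<close>]) auto
  qed
  with frequently_generic_near[OF assms(2)] obtain x where "generic (unflat x :: 'v \<Rightarrow> real^'n)"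
    and "\<forall>i\<in>I. \<exists>q. dist (flat q) (flat (ps i)) < \<delta> \<and> equivalent E (unflat x) q"
    using frequently_ex[OF frequently_eventually_frequently] by blast
  moreover from bchoice[OF this(2)] obtain qs
    where "\<forall>i\<in>I. dist (flat (qs i)) (flat (ps i)) < \<delta> \<and> equivalent E (unflat x) (qs i)" ..
  moreover have "\<not> congruent (qs i) (qs j)" if "i \<in> I" and "j \<in> I" and "i \<noteq> j" for i j
    using separated that calculation(3) by blast
  ultimately show ?thesis by blast
qed

theorem lemma4p12:
  fixes E :: "'v::finite set set"
    and vs :: "'n::finite \<Rightarrow> 'v"
    and ps :: "nat \<Rightarrow> 'v \<Rightarrow> real^'n"
    and t :: nat
  assumes "simple_graph E"
    and "min_d_rigid E TYPE('n)"
    and "\<forall>i\<in>{1..t}. inf_rigid E (ps i)"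
    and "\<forall>i\<in>{1..t}. \<forall>j\<in>{1..t}. equivalent E (ps i) (ps j)"
    and "\<forall>i\<in>{1..t}. \<forall>j\<in>{1..t}. i \<noteq> j \<longrightarrow> \<not> congruent (ps i) (ps j)"
    and "\<forall>i\<in>{1..t}. aff_indep_points (\<lambda>k. ps i (vs k))"
  shows "enat t \<le> r_d E TYPE('n)"
proof -
  have E2: "\<forall>e\<in>E. card e = 2" using assms(1) by (simp add: simple_graph_def)
  obtain p0 :: "'v \<Rightarrow> real^'n" where "generic p0"
    using assms(2) by (auto simp: min_d_rigid_def d_rigid_def)
  show ?thesis
  proof (cases "t \<le> 1")
    case True
    then have "enat t \<le> 1" by (simp add: one_enat_def)
    then show ?thesis using one_le_r_d[OF \<open>generic p0\<close>] by (rule order_trans)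
  next
    case False
    then have "1 \<in> {1..t}" and "2 \<in> {1..t}" by auto
    then have "equivalent E (ps 1) (ps 2)" and "\<not> congruent (ps 1) (ps 2)" using assms(4,5) by auto
    then have "\<not> complete_graph E" by (rule not_complete_graph_if_equivalent_not_congruent)
    then have "\<forall>i\<in>{1..t}. rig_rank E (ps i) = card E"
      using rig_rank_eq_card_if_min_d_rigid[OF assms(1,2) \<open>\<not> complete_graph E\<close>] assms(3) by simp
    moreover have "\<forall>i\<in>{1..t}. equivalent E (ps i) (ps 1)" using assms(4) \<open>1 \<in> {1..t}\<close> by simp
    ultimately obtain q :: "'v \<Rightarrow> real^'n" and qs where "generic q" and "\<forall>i\<in>{1..t}. equivalent E q (qs i)"
      and "\<forall>i\<in>{1..t}. \<forall>j\<in>{1..t}. i \<noteq> j \<longrightarrow> \<not> congruent (qs i) (qs j)"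
      using exists_generic_with_noncongruent_equivalents[OF E2 \<open>generic p0\<close> finite_atLeastAtMost
          \<open>1 \<in> {1..t}\<close> _ _ assms(5)] by blast
    then have "enat (card {1..t}) \<le> num_classes E q" by (intro card_le_num_classes) auto
    also have "\<dots> \<le> r_d E TYPE('n)" using \<open>generic q\<close> by (rule num_classes_le_r_d)
    finally show ?thesis by simp
  qed
qed

end
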